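(* Let $S\subseteq M_n$ be a noncommutative graph. Then $\alpha(S)\leq\Theta(S)\leq\mathcal{H}(S)\leq\overline{\xi}(S)$.
   Context: All scalars are complex; $M_{n\times m}$ denotes complex $n\times m$ matrices and $M_n=M_{n\times n}$. A noncommutative graph is a linear subspace $S\subseteq M_n$ that contains $I_n$ and is closed under conjugate transpose. The independence number $\alpha(S)$ is the maximum $\ell$ for which there exist nonzero vectors $\ket{\psi_1},\dots,\ket{\psi_\ell}\in\mathbb{C}^n$ with $\bra{\psi_i}A\ket{\psi_j}=0$ for all distinct $i,j\in[\ell]$ and all $A\in S$. With $S\otimes T=\mathrm{span}\{A\otimes B:A\in S,B\in T\}$ and $S^{\otimes k}$ the $k$-fold tensor power, the Shannon capacity is $\Theta(S)=\sup_k\sqrt[k]{\alpha(S^{\otimes k})}$. For a subspace $S\subseteq M_n$, $M_m(S)$ denotes the set of $m\times m$ block matrices $B=[B_{i,j}]_{i,j\in[m]}$ with every block $B_{i,j}\in S$, viewed as elements of $M_{mn}$. The Haemers bound is $\mathcal{H}(S)=\min\{\mathrm{rk}(B):\ m\in\mathbb{N},\ B\in M_m(S),\ \sum_{i=1}^m B_{i,i}=I_n\}$. A quantum channel $\Phi:M_n\to M_k$ is a map $\Phi(A)=\sum_{i=1}^m E_iAE_i^\dagger$ with $E_i\in M_{k\times n}$ and $\sum_i E_i^\dagger E_i=I_n$; its noncommutative graph is $S_\Phi=\mathrm{span}\{E_i^\dagger E_j: i,j\in[m]\}$. The orthogonal rank is $\overline{\xi}(S)=\min\{k:\ \text{there is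 a quantum channel }\Phi:M_n\to M_k \text{ with } S_\Phi\subseteq S\}$. *)

theory Defs
  imports Complex_Main "Jordan_Normal_Form.Schur_Decomposition" "Jordan_Normal_Form.DL_Rank"
begin

definition subspace_mat :: "nat \<Rightarrow> complex mat set \<Rightarrow> bool" where
  "subspace_mat n S \<longleftrightarrow> S \<subseteq> carrier_mat n n \<and> 0\<^sub>m n n \<in> S \<and>
     (\<forall>A\<in>S. \<forall>B\<in>S. A + B \<in> S) \<and> (\<forall>(c::complex) A. A \<in> S \<longrightarrow> c \<cdot>\<^sub>m A \<in> S)"

definition nc_graph :: "nat \<Rightarrow> complex mat set \<Rightarrow> bool" where
  "nc_graph n S \<longleftrightarrow> subspace_mat n S \<and> 1\<^sub>m n \<in> S \<and> (\<forall>A\<in>S. mat_adjoint A \<in> S)"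

definition mat_span :: "nat \<Rightarrow> nat \<Rightarrow> complex mat set \<Rightarrow> complex mat set" where
  "mat_span r c X = {M. \<exists>(m::nat) (coef::nat \<Rightarrow> complex) F. (\<forall>i<m. F i \<in> X) \<and>
      M = mat r c (\<lambda>(a,b). \<Sum>i<m. coef i * (F i $$ (a,b)))}"

definition braket :: "complex vec \<Rightarrow> complex mat \<Rightarrow> complex vec \<Rightarrow> complex" where
  "braket u A v = (A *\<^sub>v v) \<bullet>c u"

definition kron :: "complex mat \<Rightarrow> complex mat \<Rightarrow> complex mat" where
  "kron A B = mat (dim_row A * dim_row B) (dim_col A * dim_col B)
     (\<lambda>(i,j). A $$ (i div dim_row B, j div dim_col B) * B $$ (i mod dim_row B, j mod dim_col B))"

definition tensor_sp :: "nat \<Rightarrow> complex mat set \<Rightarrow> nat \<Rightarrow> complex mat set \<Rightarrow> complex mat set" where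
  "tensor_sp n1 S n2 T = mat_span (n1*n2) (n1*n2) {kron A B | A B. A \<in> S \<and> B \<in> T}"

fun tpow :: "nat \<Rightarrow> complex mat set \<Rightarrow> nat \<Rightarrow> complex mat set" where
  "tpow n S 0 = mat_span 1 1 {1\<^sub>m 1}"
| "tpow n S (Suc k) = tensor_sp (n^k) (tpow n S k) n S"

definition indep_number :: "nat \<Rightarrow> complex mat set \<Rightarrow> nat" where
  "indep_number n S = Sup {l. \<exists>\<psi>::nat \<Rightarrow> complex vec.
      (\<forall>i<l. \<psi> i \<in> carrier_vec n \<and> \<psi> i \<noteq> 0\<^sub>v n) \<and>
      (\<forall>i<l. \<forall>j<l. i \<noteq> j \<longrightarrow> (\<forall>A\<in>S. braket (\<psi> i) A (\<psi> j) = 0))}"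

definition shannon_capacity :: "nat \<Rightarrow> complex mat set \<Rightarrow> real" where
  "shannon_capacity n S = (SUP k\<in>{1..}. root k (real (indep_number (n^k) (tpow n S k))))"

definition block_mat :: "nat \<Rightarrow> nat \<Rightarrow> (nat \<Rightarrow> nat \<Rightarrow> complex mat) \<Rightarrow> complex mat" where
  "block_mat m n F = mat (m*n) (m*n) (\<lambda>(r,c). F (r div n) (c div n) $$ (r mod n, c mod n))"

definition mat_rank :: "complex mat \<Rightarrow> nat" where
  "mat_rank A = vec_space.rank (dim_row A) A"

definition haemers :: "nat \<Rightarrow> complex mat set \<Rightarrow> nat" where
  "haemers n S = Inf {mat_rank (block_mat m n F) | m F.
      (\<forall>i<m. \<forall>j<m. F i j \<in> S) \<and>
      mat n n (\<lambda>(a,b). \<Sum>i<m. F i i $$ (a,b)) = 1\<^sub>m n}"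

text \<open>Kraus operators E_0..E_(m-1) in M_(k x n) of a quantum channel M_n -> M_k.\<close>
definition kraus_channel :: "nat \<Rightarrow> nat \<Rightarrow> nat \<Rightarrow> (nat \<Rightarrow> complex mat) \<Rightarrow> bool" where
  "kraus_channel n k m E \<longleftrightarrow> (\<forall>i<m. E i \<in> carrier_mat k n) \<and>
      mat n n (\<lambda>(a,b). \<Sum>i<m. (mat_adjoint (E i) * E i) $$ (a,b)) = 1\<^sub>m n"

definition channel_graph :: "nat \<Rightarrow> nat \<Rightarrow> (nat \<Rightarrow> complex mat) \<Rightarrow> complex mat set" where
  "channel_graph n m E = mat_span n n {mat_adjoint (E i) * E j | i j. i < m \<and> j < m}"

definition orth_rank :: "nat \<Rightarrow> complex mat set \<Rightarrow> nat" where
  "orth_rank n S = Inf {k. \<exists>m E. kraus_channel n k m E \<and> channel_graph n m E \<subseteq> S}"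

end

theory Submission
  imports Defs
begin

(*
  Call a block matrix B = [B_ij] with all blocks in S and sum_i B_ii = I a Haemers witness.
  Given an independent set \<psi>_1, ..., \<psi>_l, choose for every i an index a_i with
  <\<psi>_i|B_(a_i a_i)|\<psi>_i> \<noteq> 0, which exists because the diagonal blocks sum to I. The l x l
  matrix [<\<psi>_i|B_(a_i a_j)|\<psi>_j>] is then diagonal with nonzero diagonal, and it is a
  compression of B, so l \<le> rk B. Blockwise Kronecker products of witnesses are witnesses for the
  tensor product, and rank factorizations multiply, so \<alpha>(S^\<otimes>k) \<le> H(S)^k and hence
  \<Theta>(S) \<le> H(S); \<alpha> \<le> \<Theta> is the case k = 1. Finally, the Kraus operators of a channel
  M_n \<rightarrow> M_k with S_\<Phi> \<subseteq> S form the witness [E_i^* E_j], a Gram matrix of vectors in \<complex>^k,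
  hence of rank at most k.
*)

lemma index_split_less:
  fixes R m N :: nat
  assumes "R < m * N"
  shows "R div N < m" "R mod N < N"
proof -
  show "R div N < m" using assms by (simp add: less_mult_imp_div_less)
  have "0 < N" using assms by (auto intro!: Nat.gr0I)
  then show "R mod N < N" by simp
qed

lemma block_index_less:
  fixes a x m N :: nat
  assumes "a < m" "x < N"
  shows "a * N + x < m * N"
proof -
  have "a * N + x < Suc a * N" using assms(2) by simp
  also have "\<dots> \<le> m * N" using assms(1) by (intro mult_le_mono1) simp
  finally show ?thesis .
qed

lemma sum_lessThan_mult_div_mod:
  fixes h :: "nat \<Rightarrow> nat \<Rightarrow> 'a::comm_monoid_add"
  shows "(\<Sum>w<a*b. h (w div b) (w mod b)) = (\<Sum>u<a. \<Sum>v<b. h u v)"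
proof -
  have "(\<Sum>w<a*b. h (w div b) (w mod b)) = (\<Sum>(u,v)\<in>{..<a} \<times> {..<b}. h u v)"
    by (rule sum.reindex_bij_witness[where i = "\<lambda>(u,v). u * b + v" and j = "\<lambda>w. (w div b, w mod b)"])
      (auto simp: index_split_less block_index_less)
  then show ?thesis by (simp add: sum.cartesian_product)
qed

lemma rank_sum_of_products_le:
  fixes f g :: "nat \<Rightarrow> nat \<Rightarrow> 'a::field"
  shows "vec_space.rank a (mat a b (\<lambda>(i,j). \<Sum>u<r. f i u * g u j)) \<le> r"
proof (induction r)
  case 0
  have "mat a b (\<lambda>(i,j). \<Sum>u<0. f i u * g u j) = 0\<^sub>m a b" by (rule eq_matI) auto
  then show ?case using vec_space.rank_0I by (metis le_refl)
next
  case (Suc r)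
  have split: "mat a b (\<lambda>(i,j). \<Sum>u<Suc r. f i u * g u j) =
     mat a b (\<lambda>(i,j). \<Sum>u<r. f i u * g u j) + mat a b (\<lambda>(i,j). f i r * g r j)"
    by (rule eq_matI) auto
  have "vec_space.rank a (mat a b (\<lambda>(i,j). f i r * g r j)) \<le> 1"
    by (rule vec_space.rank_le_1_product_entries[where f = "\<lambda>i. f i r" and g = "\<lambda>j. g r j"]) auto
  then show ?case unfolding split
    using vec_space.rank_subadditive[of "mat a b (\<lambda>(i,j). \<Sum>u<r. f i u * g u j)" a b
        "mat a b (\<lambda>(i,j). f i r * g r j)"] Suc by fastforce
qed

definition factors_through :: "nat \<Rightarrow> 'a::field mat \<Rightarrow> bool" where
  "factors_through r A \<longleftrightarrow>
     (\<exists>f g. A = mat (dim_row A) (dim_col A) (\<lambda>(i,j). \<Sum>u<r. f i u * g u j))"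

lemma (in vec_space) column_space_basis:
  assumes A: "A \<in> carrier_mat n b"
  obtains \<beta> where "finite \<beta>" "\<beta> \<subseteq> carrier_vec n" "card \<beta> = rank A"
    "\<And>j. j < b \<Longrightarrow> col A j \<in> span \<beta>"
proof -
  define W where "W = span (set (cols A))"
  have cols: "set (cols A) \<subseteq> carrier_vec n" using A cols_dim by blast
  have sub: "VectorSpace.subspace class_ring W V" unfolding W_def by (rule span_is_subspace) (use cols in simp)
  have vsW: "vectorspace class_ring (vs W)" using subspace_is_vs[OF sub] .
  have "vectorspace.fin_dim class_ring (vs W)" unfolding W_def using fin_dim_span_cols[OF A] .
  then obtain \<beta> where fin: "finite \<beta>" and basis: "vectorspace.basis class_ring (vs W) \<beta>"
    using vectorspace.finite_basis_exists[OF vsW] by blast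
  have card: "card \<beta> = rank A" unfolding rank_def W_def[symmetric]
    using vectorspace.dim_basis[OF vsW fin basis] ..
  have submod: "submodule class_ring W V" using sub unfolding VectorSpace.subspace_def by blast
  have "\<beta> \<subseteq> W" using basis unfolding vectorspace.basis_def[OF vsW] by simp
  moreover have "W \<subseteq> carrier_vec n" using submod unfolding submodule_def by simp
  ultimately have carrier: "\<beta> \<subseteq> carrier_vec n" by blast
  have "span \<beta> = W"
    using basis span_li_not_depend(1)[OF \<open>\<beta> \<subseteq> W\<close> submod]
    unfolding vectorspace.basis_def[OF vsW] by simp
  moreover have "col A j \<in> W" if "j < b" for j
    using that A in_own_span[OF cols] unfolding W_def
    by (metis carrier_matD(2) cols_length cols_nth nth_mem subsetD)
  ultimately show thesis using that fin carrier card by blast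
qed

lemma factors_through_rank:
  fixes A :: "'a::field mat"
  assumes A: "A \<in> carrier_mat a b"
  shows "factors_through (vec_space.rank a A) A"
proof -
  interpret vec_space "TYPE('a)" a .
  obtain \<beta> where fin: "finite \<beta>" and carrier: "\<beta> \<subseteq> carrier_vec a" and card: "card \<beta> = rank A"
    and span: "\<And>j. j < b \<Longrightarrow> col A j \<in> span \<beta>"
    using column_space_basis[OF A] by blast
  have "\<exists>c. lincomb c \<beta> = col A j" if "j < b" for j
    using finite_in_span[OF fin carrier span[OF that]] by blast
  then obtain c where c: "\<And>j. j < b \<Longrightarrow> lincomb (c j) \<beta> = col A j" by metis
  obtain e where e: "bij_betw e {..<card \<beta>} \<beta>"
    using ex_bij_betw_nat_finite[OF fin] by (auto simp: atLeast0LessThan)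
  have entry: "A $$ (i,j) = (\<Sum>u<card \<beta>. e u $ i * c j (e u))" if i: "i < a" and j: "j < b" for i j
  proof -
    have "A $$ (i,j) = lincomb (c j) \<beta> $ i" using c[OF j] A i j by auto
    also have "\<dots> = (\<Sum>x\<in>\<beta>. c j x * x $ i)" using lincomb_index[OF i carrier] .
    also have "\<dots> = (\<Sum>u<card \<beta>. e u $ i * c j (e u))"
      using sum.reindex_bij_betw[OF e, of "\<lambda>x. c j x * x $ i"] by (simp add: mult.commute)
    finally show ?thesis .
  qed
  have "A = mat (dim_row A) (dim_col A) (\<lambda>(i,j). \<Sum>u<card \<beta>. e u $ i * c j (e u))"
    using A by (intro eq_matI) (auto simp: entry)
  then show ?thesis unfolding factors_through_def card[symmetric]
    by (intro exI[of _ "\<lambda>i u. e u $ i"] exI[of _ "\<lambda>u j. c j (e u)"])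
qed

lemma rank_diagonal_nonzero:
  fixes D :: "'a::field mat"
  assumes D: "D \<in> carrier_mat l l"
    and off_diag: "\<And>i j. i < l \<Longrightarrow> j < l \<Longrightarrow> i \<noteq> j \<Longrightarrow> D $$ (i,j) = 0"
    and diag: "\<And>i. i < l \<Longrightarrow> D $$ (i,i) \<noteq> 0"
  shows "vec_space.rank l D = l"
proof -
  have "upper_triangular D" using D off_diag unfolding upper_triangular_def by auto
  then have "det D = prod_list (diag_mat D)" using D by (rule det_upper_triangular)
  also have "\<dots> = (\<Prod>i = 0..<l. D $$ (i,i))" using D by (simp add: prod_list_diag_prod)
  also have "\<dots> \<noteq> 0" using diag by simp
  finally show ?thesis using vec_space.det_rank_iff[OF D] by simp
qed

lemma subspace_mat_lincomb_mem:
  fixes m :: nat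
  assumes S: "subspace_mat n S" and G: "\<forall>i<m. G i \<in> S"
  shows "mat n n (\<lambda>(a,b). \<Sum>i<m. c i * G i $$ (a,b)) \<in> S"
  using G
proof (induction m)
  case 0
  have "mat n n (\<lambda>(a,b). \<Sum>i<0. c i * G i $$ (a,b)) = 0\<^sub>m n n" by (rule eq_matI) auto
  then show ?case using S unfolding subspace_mat_def by metis
next
  case (Suc m)
  have "G m \<in> carrier_mat n n" using Suc.prems S unfolding subspace_mat_def by auto
  then have split: "mat n n (\<lambda>(a,b). \<Sum>i<Suc m. c i * G i $$ (a,b)) =
      mat n n (\<lambda>(a,b). \<Sum>i<m. c i * G i $$ (a,b)) + c m \<cdot>\<^sub>m G m"
    by (intro eq_matI) auto
  have "mat n n (\<lambda>(a,b). \<Sum>i<m. c i * G i $$ (a,b)) \<in> S"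
    by (rule Suc.IH) (use Suc.prems in simp)
  moreover have "c m \<cdot>\<^sub>m G m \<in> S" using Suc.prems S unfolding subspace_mat_def by auto
  ultimately show ?case unfolding split using S unfolding subspace_mat_def by blast
qed

lemma mat_span_subset:
  assumes "subspace_mat n S" "X \<subseteq> S"
  shows "mat_span n n X \<subseteq> S"
  using assms subspace_mat_lincomb_mem unfolding mat_span_def by blast

lemma mem_mat_span:
  assumes "A \<in> X" "A \<in> carrier_mat r c"
  shows "A \<in> mat_span r c X"
proof -
  have "A = mat r c (\<lambda>(a,b). \<Sum>i<(1::nat). 1 * A $$ (a,b))"
    using assms(2) by (intro eq_matI) auto
  then show ?thesis unfolding mat_span_def using assms(1)
    by (intro CollectI exI[of _ "1::nat"] exI[of _ "\<lambda>_. 1"] exI[of _ "\<lambda>_. A"]) auto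
qed

lemma braket_eq_sum:
  assumes "u \<in> carrier_vec n" "v \<in> carrier_vec n" "A \<in> carrier_mat n n"
  shows "braket u A v = (\<Sum>x<n. \<Sum>y<n. cnj (u $ x) * A $$ (x,y) * v $ y)"
  using assms unfolding braket_def
  by (simp add: scalar_prod_def mult_mat_vec_def sum_distrib_left atLeast0LessThan mult_ac)

lemma braket_mat_sum:
  assumes u: "u \<in> carrier_vec n" and v: "v \<in> carrier_vec n"
    and G: "\<forall>i<m. G i \<in> carrier_mat n n"
  shows "braket u (mat n n (\<lambda>(a,b). \<Sum>i<m. G i $$ (a,b))) v = (\<Sum>i<m. braket u (G i) v)"
proof -
  have "braket u (mat n n (\<lambda>(a,b). \<Sum>i<m. G i $$ (a,b))) v =
     (\<Sum>x<n. \<Sum>y<n. \<Sum>i<m. cnj (u $ x) * G i $$ (x,y) * v $ y)"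
    by (simp add: braket_eq_sum[OF u v] sum_distrib_left sum_distrib_right)
  also have "\<dots> = (\<Sum>i<m. \<Sum>x<n. \<Sum>y<n. cnj (u $ x) * G i $$ (x,y) * v $ y)"
    by (simp add: sum.swap[where A = "{..<m}"])
  also have "\<dots> = (\<Sum>i<m. braket u (G i) v)"
    using G by (simp add: braket_eq_sum[OF u v])
  finally show ?thesis .
qed

lemma kron_carrier_mat:
  "A \<in> carrier_mat p p' \<Longrightarrow> B \<in> carrier_mat q q' \<Longrightarrow> kron A B \<in> carrier_mat (p*q) (p'*q')"
  unfolding kron_def by auto

lemma index_kron:
  "A \<in> carrier_mat p p' \<Longrightarrow> B \<in> carrier_mat q q' \<Longrightarrow> i < p*q \<Longrightarrow> j < p'*q' \<Longrightarrow>
   kron A B $$ (i,j) = A $$ (i div q, j div q') * B $$ (i mod q, j mod q')"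
  unfolding kron_def by auto

lemma mat_adjoint_carrier_mat: "E \<in> carrier_mat k n \<Longrightarrow> mat_adjoint E \<in> carrier_mat n k"
  unfolding mat_adjoint_def by auto

lemma index_mat_adjoint:
  "E \<in> carrier_mat k n \<Longrightarrow> i < n \<Longrightarrow> j < k \<Longrightarrow> mat_adjoint E $$ (i,j) = conjugate (E $$ (j,i))"
  unfolding mat_adjoint_def by (auto simp: mat_of_rows_def)

lemma mat_adjoint_one: "mat_adjoint (1\<^sub>m n :: complex mat) = 1\<^sub>m n"
proof -
  have "mat_adjoint (1\<^sub>m n :: complex mat) \<in> carrier_mat n n"
    by (rule mat_adjoint_carrier_mat) simp
  then show ?thesis by (intro eq_matI) (auto simp: index_mat_adjoint[of _ n n])
qed

lemma dim_block_mat [simp]: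
  "dim_row (block_mat m n F) = m*n" "dim_col (block_mat m n F) = m*n"
  unfolding block_mat_def by simp_all

definition haemers_witness ::
    "nat \<Rightarrow> complex mat set \<Rightarrow> nat \<Rightarrow> (nat \<Rightarrow> nat \<Rightarrow> complex mat) \<Rightarrow> bool" where
  "haemers_witness n S m F \<longleftrightarrow> (\<forall>i<m. \<forall>j<m. F i j \<in> S \<inter> carrier_mat n n) \<and>
     mat n n (\<lambda>(a,b). \<Sum>i<m. F i i $$ (a,b)) = 1\<^sub>m n"

definition independent_sizes :: "nat \<Rightarrow> complex mat set \<Rightarrow> nat set" where
  "independent_sizes n S = {l. \<exists>\<psi>::nat \<Rightarrow> complex vec.
      (\<forall>i<l. \<psi> i \<in> carrier_vec n \<and> \<psi> i \<noteq> 0\<^sub>v n) \<and>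
      (\<forall>i<l. \<forall>j<l. i \<noteq> j \<longrightarrow> (\<forall>A\<in>S. braket (\<psi> i) A (\<psi> j) = 0))}"

lemma indep_number_eq_Sup: "indep_number n S = Sup (independent_sizes n S)"
  unfolding indep_number_def independent_sizes_def ..

lemma zero_mem_independent_sizes: "0 \<in> independent_sizes n S"
  unfolding independent_sizes_def by auto

lemma independent_sizes_antimono:
  "S \<subseteq> T \<Longrightarrow> independent_sizes n T \<subseteq> independent_sizes n S"
  unfolding independent_sizes_def by blast

lemma haemers_witness_diagonal_braket:
  assumes F: "haemers_witness n S m F" and \<psi>: "\<psi> \<in> carrier_vec n" "\<psi> \<noteq> 0\<^sub>v n"
  shows "\<exists>a<m. braket \<psi> (F a a) \<psi> \<noteq> 0"
proof -
  have "(\<Sum>a<m. braket \<psi> (F a a) \<psi>) = braket \<psi> (1\<^sub>m n) \<psi>"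
    using F braket_mat_sum[OF \<psi>(1) \<psi>(1), of m "\<lambda>a. F a a"] unfolding haemers_witness_def by auto
  also have "\<dots> = \<psi> \<bullet>c \<psi>" unfolding braket_def using \<psi>(1) by simp
  also have "\<dots> \<noteq> 0" using \<psi> by simp
  finally show ?thesis by (metis (mono_tags, lifting) lessThan_iff sum.neutral)
qed

lemma braket_block_factor:
  assumes B: "block_mat m n F = mat (m*n) (m*n) (\<lambda>(i,j). \<Sum>w<r. f i w * g w j)"
    and ab: "a < m" "b < m" and F: "F a b \<in> carrier_mat n n"
    and uv: "u \<in> carrier_vec n" "v \<in> carrier_vec n"
  shows "braket u (F a b) v =
    (\<Sum>w<r. (\<Sum>x<n. cnj (u $ x) * f (a*n + x) w) * (\<Sum>y<n. g w (b*n + y) * v $ y))"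
proof -
  have entry: "F a b $$ (x,y) = (\<Sum>w<r. f (a*n + x) w * g w (b*n + y))"
    if "x < n" "y < n" for x y
  proof -
    have "a*n + x < m*n" "b*n + y < m*n" using ab that by (simp_all add: block_index_less)
    then have "block_mat m n F $$ (a*n + x, b*n + y) = F a b $$ (x,y)"
      unfolding block_mat_def using that by simp
    then show ?thesis using B \<open>a*n + x < m*n\<close> \<open>b*n + y < m*n\<close> by simp
  qed
  have "braket u (F a b) v =
      (\<Sum>x<n. \<Sum>y<n. \<Sum>w<r. cnj (u $ x) * f (a*n + x) w * (g w (b*n + y) * v $ y))"
    by (simp add: braket_eq_sum[OF uv F] entry sum_distrib_left sum_distrib_right mult.assoc)
  also have "\<dots> = (\<Sum>w<r. \<Sum>x<n. \<Sum>y<n. cnj (u $ x) * f (a*n + x) w * (g w (b*n + y) * v $ y))"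
    by (simp add: sum.swap[where A = "{..<r}"])
  also have "\<dots> = (\<Sum>w<r. (\<Sum>x<n. cnj (u $ x) * f (a*n + x) w) * (\<Sum>y<n. g w (b*n + y) * v $ y))"
    by (simp add: sum_product)
  finally show ?thesis .
qed

lemma independent_size_le_factor_width:
  assumes F: "haemers_witness n S m F" and r: "factors_through r (block_mat m n F)"
    and l: "l \<in> independent_sizes n S"
  shows "l \<le> r"
proof -
  obtain \<psi> where \<psi>: "\<And>i. i < l \<Longrightarrow> \<psi> i \<in> carrier_vec n" "\<And>i. i < l \<Longrightarrow> \<psi> i \<noteq> 0\<^sub>v n"
    and orth: "\<And>i j A. i < l \<Longrightarrow> j < l \<Longrightarrow> i \<noteq> j \<Longrightarrow> A \<in> S \<Longrightarrow> braket (\<psi> i) A (\<psi> j) = 0"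
    using l unfolding independent_sizes_def by blast
  have FS: "\<And>i j. i < m \<Longrightarrow> j < m \<Longrightarrow> F i j \<in> S"
    and Fc: "\<And>i j. i < m \<Longrightarrow> j < m \<Longrightarrow> F i j \<in> carrier_mat n n"
    using F unfolding haemers_witness_def by auto
  obtain f g where B: "block_mat m n F = mat (m*n) (m*n) (\<lambda>(i,j). \<Sum>w<r. f i w * g w j)"
    using r unfolding factors_through_def by auto
  obtain \<alpha> where \<alpha>: "\<And>i. i < l \<Longrightarrow> \<alpha> i < m"
    and diag: "\<And>i. i < l \<Longrightarrow> braket (\<psi> i) (F (\<alpha> i) (\<alpha> i)) (\<psi> i) \<noteq> 0"
    using haemers_witness_diagonal_braket[OF F \<psi>] by metis
  define D where "D = mat l l (\<lambda>(i,j). braket (\<psi> i) (F (\<alpha> i) (\<alpha> j)) (\<psi> j))"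
  have "D = mat l l (\<lambda>(i,j). \<Sum>w<r. (\<Sum>x<n. cnj (\<psi> i $ x) * f (\<alpha> i * n + x) w) *
                 (\<Sum>y<n. g w (\<alpha> j * n + y) * \<psi> j $ y))"
    unfolding D_def by (intro eq_matI) (auto simp: braket_block_factor[OF B] \<alpha> Fc \<psi>)
  then have "vec_space.rank l D \<le> r" by (simp add: rank_sum_of_products_le)
  moreover have "vec_space.rank l D = l"
    by (rule rank_diagonal_nonzero) (auto simp: D_def orth FS \<alpha> diag)
  ultimately show ?thesis by simp
qed

lemma independent_sizes_bdd_above:
  "haemers_witness n S m F \<Longrightarrow> factors_through r (block_mat m n F) \<Longrightarrow>
   bdd_above (independent_sizes n S)"
  using independent_size_le_factor_width by (meson bdd_aboveI)

lemma indep_number_le_factor_width: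
  "haemers_witness n S m F \<Longrightarrow> factors_through r (block_mat m n F) \<Longrightarrow> indep_number n S \<le> r"
  unfolding indep_number_eq_Sup using independent_size_le_factor_width zero_mem_independent_sizes
  by (metis cSup_least empty_iff)

definition block_kron :: "nat \<Rightarrow> (nat \<Rightarrow> nat \<Rightarrow> complex mat) \<Rightarrow> (nat \<Rightarrow> nat \<Rightarrow> complex mat) \<Rightarrow>
    nat \<Rightarrow> nat \<Rightarrow> complex mat" where
  "block_kron m2 F1 F2 i j = kron (F1 (i div m2) (j div m2)) (F2 (i mod m2) (j mod m2))"

lemma haemers_witness_block_kron:
  assumes F1: "haemers_witness n1 S1 m1 F1" and F2: "haemers_witness n2 S2 m2 F2"
  shows "haemers_witness (n1*n2) (tensor_sp n1 S1 n2 S2) (m1*m2) (block_kron m2 F1 F2)"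
proof -
  have FS1: "\<And>i j. i < m1 \<Longrightarrow> j < m1 \<Longrightarrow> F1 i j \<in> S1"
    and Fc1: "\<And>i j. i < m1 \<Longrightarrow> j < m1 \<Longrightarrow> F1 i j \<in> carrier_mat n1 n1"
    and sum1: "mat n1 n1 (\<lambda>(a,b). \<Sum>i<m1. F1 i i $$ (a,b)) = 1\<^sub>m n1"
    using F1 unfolding haemers_witness_def by auto
  have FS2: "\<And>i j. i < m2 \<Longrightarrow> j < m2 \<Longrightarrow> F2 i j \<in> S2"
    and Fc2: "\<And>i j. i < m2 \<Longrightarrow> j < m2 \<Longrightarrow> F2 i j \<in> carrier_mat n2 n2"
    and sum2: "mat n2 n2 (\<lambda>(a,b). \<Sum>i<m2. F2 i i $$ (a,b)) = 1\<^sub>m n2"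
    using F2 unfolding haemers_witness_def by auto
  have blocks: "block_kron m2 F1 F2 i j \<in> tensor_sp n1 S1 n2 S2 \<inter> carrier_mat (n1*n2) (n1*n2)"
    if "i < m1*m2" "j < m1*m2" for i j
  proof -
    note idx = index_split_less[OF that(1)] index_split_less[OF that(2)]
    have "block_kron m2 F1 F2 i j \<in> carrier_mat (n1*n2) (n1*n2)"
      unfolding block_kron_def using idx by (intro kron_carrier_mat Fc1 Fc2)
    moreover have "block_kron m2 F1 F2 i j \<in> {kron A B | A B. A \<in> S1 \<and> B \<in> S2}"
      unfolding block_kron_def using idx FS1 FS2 by blast
    ultimately show ?thesis unfolding tensor_sp_def by (simp add: mem_mat_span)
  qed
  have "(\<Sum>i<m1*m2. block_kron m2 F1 F2 i i $$ (a,b)) = 1\<^sub>m (n1*n2) $$ (a,b)"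
    if "a < n1*n2" "b < n1*n2" for a b
  proof -
    note a = index_split_less[OF that(1)] and b = index_split_less[OF that(2)]
    have "(\<Sum>i<m1*m2. block_kron m2 F1 F2 i i $$ (a,b)) =
        (\<Sum>i<m1*m2. F1 (i div m2) (i div m2) $$ (a div n2, b div n2) *
                    F2 (i mod m2) (i mod m2) $$ (a mod n2, b mod n2))"
      unfolding block_kron_def
      by (intro sum.cong refl index_kron[OF Fc1 Fc2]) (auto simp: index_split_less that)
    also have "\<dots> = (\<Sum>p<m1. F1 p p $$ (a div n2, b div n2)) * (\<Sum>q<m2. F2 q q $$ (a mod n2, b mod n2))"
      by (simp add: sum_lessThan_mult_div_mod[where h = "\<lambda>p q. F1 p p $$ (a div n2, b div n2) *
        F2 q q $$ (a mod n2, b mod n2)"] sum_product)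
    also have "\<dots> = 1\<^sub>m n1 $$ (a div n2, b div n2) * 1\<^sub>m n2 $$ (a mod n2, b mod n2)"
      using arg_cong[OF sum1, of "\<lambda>M. M $$ (a div n2, b div n2)"]
        arg_cong[OF sum2, of "\<lambda>M. M $$ (a mod n2, b mod n2)"] a b by simp
    also have "\<dots> = 1\<^sub>m (n1*n2) $$ (a,b)"
      using a b that by simp (metis div_mult_mod_eq)
    finally show ?thesis .
  qed
  then have "mat (n1*n2) (n1*n2) (\<lambda>(a,b). \<Sum>i<m1*m2. block_kron m2 F1 F2 i i $$ (a,b)) = 1\<^sub>m (n1*n2)"
    by (intro eq_matI) auto
  with blocks show ?thesis unfolding haemers_witness_def by blast
qed

lemma factors_through_block_kron:
  assumes Fc1: "\<And>i j. i < m1 \<Longrightarrow> j < m1 \<Longrightarrow> F1 i j \<in> carrier_mat n1 n1"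
    and Fc2: "\<And>i j. i < m2 \<Longrightarrow> j < m2 \<Longrightarrow> F2 i j \<in> carrier_mat n2 n2"
    and r1: "factors_through r1 (block_mat m1 n1 F1)"
    and r2: "factors_through r2 (block_mat m2 n2 F2)"
  shows "factors_through (r1*r2) (block_mat (m1*m2) (n1*n2) (block_kron m2 F1 F2))"
proof -
  obtain f1 g1 where B1: "block_mat m1 n1 F1 = mat (m1*n1) (m1*n1) (\<lambda>(i,j). \<Sum>u<r1. f1 i u * g1 u j)"
    using r1 unfolding factors_through_def by auto
  obtain f2 g2 where B2: "block_mat m2 n2 F2 = mat (m2*n2) (m2*n2) (\<lambda>(i,j). \<Sum>u<r2. f2 i u * g2 u j)"
    using r2 unfolding factors_through_def by auto
  let ?N = "n1*n2"
  text \<open>Up to a simultaneous permutation of rows and columns, the block matrix of block_kron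
    is the Kronecker product of the two factor block matrices: its row R is the tensor product of
    row \<rho>1 R of the first and row \<rho>2 R of the second.\<close>
  define \<rho>1 where "\<rho>1 R = R div ?N div m2 * n1 + R mod ?N div n2" for R
  define \<rho>2 where "\<rho>2 R = R div ?N mod m2 * n2 + R mod ?N mod n2" for R
  have idx: "R div ?N div m2 < m1" "R div ?N mod m2 < m2" "R mod ?N div n2 < n1" "R mod ?N mod n2 < n2"
    if "R < m1*m2*?N" for R
    using index_split_less[OF index_split_less(1)[OF that]]
      index_split_less[OF index_split_less(2)[OF that]] by auto
  have \<rho>: "\<rho>1 R < m1*n1" "\<rho>2 R < m2*n2" if "R < m1*m2*?N" for R
    unfolding \<rho>1_def \<rho>2_def using idx[OF that] by (simp_all add: block_index_less)
  define f where "f R w = f1 (\<rho>1 R) (w div r2) * f2 (\<rho>2 R) (w mod r2)" for R w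
  define g where "g w C = g1 (w div r2) (\<rho>1 C) * g2 (w mod r2) (\<rho>2 C)" for w C
  have entry: "block_mat (m1*m2) ?N (block_kron m2 F1 F2) $$ (R,C) = (\<Sum>w<r1*r2. f R w * g w C)"
    if R: "R < m1*m2*?N" and C: "C < m1*m2*?N" for R C
  proof -
    have "block_mat (m1*m2) ?N (block_kron m2 F1 F2) $$ (R,C) =
        block_mat m1 n1 F1 $$ (\<rho>1 R, \<rho>1 C) * block_mat m2 n2 F2 $$ (\<rho>2 R, \<rho>2 C)"
      using R C idx[OF R] idx[OF C] \<rho>[OF R] \<rho>[OF C]
      by (simp add: block_mat_def block_kron_def index_kron[OF Fc1 Fc2] \<rho>1_def \<rho>2_def)
    also have "\<dots> = (\<Sum>u<r1. \<Sum>v<r2. f1 (\<rho>1 R) u * f2 (\<rho>2 R) v * (g1 u (\<rho>1 C) * g2 v (\<rho>2 C)))"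
      using \<rho>[OF R] \<rho>[OF C] by (simp add: B1 B2 sum_product mult_ac)
    also have "\<dots> = (\<Sum>w<r1*r2. f R w * g w C)"
      unfolding f_def g_def by (rule sum_lessThan_mult_div_mod[symmetric])
    finally show ?thesis .
  qed
  have "block_mat (m1*m2) ?N (block_kron m2 F1 F2) =
      mat (m1*m2*?N) (m1*m2*?N) (\<lambda>(R,C). \<Sum>w<r1*r2. f R w * g w C)"
    by (rule eq_matI) (simp_all add: entry)
  then show ?thesis unfolding factors_through_def by auto
qed

lemma haemers_witness_tpow:
  assumes F: "haemers_witness n S m F" and r: "factors_through r (block_mat m n F)"
  shows "\<exists>m' F'. haemers_witness (n^k) (tpow n S k) m' F' \<and> factors_through (r^k) (block_mat m' (n^k) F')"
proof (induction k)
  case 0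
  have "1\<^sub>m 1 \<in> tpow n S 0" by (simp add: mem_mat_span)
  then have "haemers_witness 1 (tpow n S 0) 1 (\<lambda>_ _. 1\<^sub>m 1)"
    unfolding haemers_witness_def by (auto intro!: eq_matI)
  moreover have "factors_through 1 (block_mat 1 1 (\<lambda>_ _. 1\<^sub>m 1))"
    unfolding factors_through_def
    by (intro exI[of _ "\<lambda>_ _. 1"]) (auto intro!: eq_matI simp: block_mat_def)
  ultimately show ?case by auto
next
  case (Suc k)
  then obtain m' F' where F': "haemers_witness (n^k) (tpow n S k) m' F'"
    and r': "factors_through (r^k) (block_mat m' (n^k) F')" by blast
  have "haemers_witness (n^k*n) (tensor_sp (n^k) (tpow n S k) n S) (m'*m) (block_kron m F' F)"
    using haemers_witness_block_kron[OF F' F] .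
  moreover have "factors_through (r^k*r) (block_mat (m'*m) (n^k*n) (block_kron m F' F))"
    using F F' r r' unfolding haemers_witness_def by (intro factors_through_block_kron) auto
  ultimately show ?case unfolding tpow.simps power_Suc2 by blast
qed

lemma haemers_attained:
  assumes S: "nc_graph n S"
  shows "\<exists>m F. haemers_witness n S m F \<and> factors_through (haemers n S) (block_mat m n F)"
proof -
  have carrier: "S \<subseteq> carrier_mat n n" using S unfolding nc_graph_def subspace_mat_def by auto
  let ?ranks = "{mat_rank (block_mat m n F) | m F.
      (\<forall>i<m. \<forall>j<m. F i j \<in> S) \<and> mat n n (\<lambda>(a,b). \<Sum>i<m. F i i $$ (a,b)) = 1\<^sub>m n}"
  have "mat_rank (block_mat 1 n (\<lambda>_ _. 1\<^sub>m n)) \<in> ?ranks"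
    using S unfolding nc_graph_def by (auto intro!: exI[of _ 1] eq_matI)
  then have "haemers n S \<in> ?ranks" unfolding haemers_def by (intro Inf_nat_def1) blast
  then obtain m F where FS: "\<forall>i<m. \<forall>j<m. F i j \<in> S"
    and sum: "mat n n (\<lambda>(a,b). \<Sum>i<m. F i i $$ (a,b)) = 1\<^sub>m n"
    and rank: "haemers n S = mat_rank (block_mat m n F)" by blast
  have F: "haemers_witness n S m F" unfolding haemers_witness_def using FS sum carrier by blast
  have "factors_through (vec_space.rank (m*n) (block_mat m n F)) (block_mat m n F)"
    by (rule factors_through_rank[where b = "m*n"]) (simp add: carrier_matI)
  then have "factors_through (haemers n S) (block_mat m n F)"
    unfolding rank mat_rank_def by simp
  with F show ?thesis by blast
qed

lemma tpow_one_subset: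
  assumes S: "subspace_mat n S"
  shows "tpow n S 1 \<subseteq> S"
proof -
  have carrier: "S \<subseteq> carrier_mat n n" using S unfolding subspace_mat_def by auto
  have kron_scalar: "kron A B = A $$ (0,0) \<cdot>\<^sub>m B"
    if "A \<in> carrier_mat 1 1" "B \<in> carrier_mat n n" for A B
    using that kron_carrier_mat[OF that] by (intro eq_matI) (auto simp: index_kron[of _ 1 1 _ n n])
  have "A \<in> carrier_mat 1 1" if "A \<in> mat_span 1 1 X" for A X
    using that unfolding mat_span_def by auto
  then have "{kron A B | A B. A \<in> mat_span 1 1 {1\<^sub>m 1} \<and> B \<in> S} \<subseteq> S"
    using S carrier kron_scalar unfolding subspace_mat_def by auto
  then show ?thesis unfolding One_nat_def tpow.simps tensor_sp_def
    using mat_span_subset[OF S] by simp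
qed

lemma block_mat_gram:
  assumes E: "\<And>i. i < m \<Longrightarrow> E i \<in> carrier_mat k n"
  shows "block_mat m n (\<lambda>i j. mat_adjoint (E i) * E j) = mat (m*n) (m*n)
    (\<lambda>(R,C). \<Sum>u<k. cnj (E (R div n) $$ (u, R mod n)) * E (C div n) $$ (u, C mod n))"
proof -
  have "block_mat m n (\<lambda>i j. mat_adjoint (E i) * E j) $$ (R,C) =
      (\<Sum>u<k. cnj (E (R div n) $$ (u, R mod n)) * E (C div n) $$ (u, C mod n))"
    if "R < m*n" "C < m*n" for R C
    using that index_split_less[OF that(1)] index_split_less[OF that(2)]
      E[of "R div n"] E[of "C div n"] mat_adjoint_carrier_mat[OF E[of "R div n"]]
    by (simp add: block_mat_def scalar_prod_def atLeast0LessThan index_mat_adjoint)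
  then show ?thesis by (intro eq_matI) auto
qed

lemma haemers_le_orth_rank:
  assumes S: "nc_graph n S"
  shows "haemers n S \<le> orth_rank n S"
proof -
  have sub: "subspace_mat n S" and one: "1\<^sub>m n \<in> S" using S unfolding nc_graph_def by auto
  have "kraus_channel n n 1 (\<lambda>_. 1\<^sub>m n)"
    unfolding kraus_channel_def mat_adjoint_one by (auto intro!: eq_matI)
  moreover have "channel_graph n 1 (\<lambda>_. 1\<^sub>m n) \<subseteq> S"
    unfolding channel_graph_def mat_adjoint_one using one by (auto intro!: mat_span_subset[OF sub])
  ultimately have nonempty: "n \<in> {k. \<exists>m E. kraus_channel n k m E \<and> channel_graph n m E \<subseteq> S}"
    by blast
  show ?thesis unfolding orth_rank_def
  proof (rule cInf_greatest)
    fix k assume "k \<in> {k. \<exists>m E. kraus_channel n k m E \<and> channel_graph n m E \<subseteq> S}"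
    then obtain m E where E: "kraus_channel n k m E" and graph: "channel_graph n m E \<subseteq> S" by blast
    have Ec: "\<And>i. i < m \<Longrightarrow> E i \<in> carrier_mat k n" using E unfolding kraus_channel_def by auto
    have gram: "mat_adjoint (E i) * E j \<in> carrier_mat n n" if "i < m" "j < m" for i j
      using mat_adjoint_carrier_mat[OF Ec[OF that(1)]] Ec[OF that(2)] by (rule mult_carrier_mat)
    then have "mat_adjoint (E i) * E j \<in> channel_graph n m E" if "i < m" "j < m" for i j
      unfolding channel_graph_def using that by (intro mem_mat_span) auto
    then have "haemers_witness n S m (\<lambda>i j. mat_adjoint (E i) * E j)"
      using E graph gram unfolding haemers_witness_def kraus_channel_def by auto
    then have "haemers n S \<le> mat_rank (block_mat m n (\<lambda>i j. mat_adjoint (E i) * E j))"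
      unfolding haemers_def haemers_witness_def by (intro cInf_lower) auto
    also have "\<dots> \<le> k"
      using rank_sum_of_products_le[where a = "m*n" and b = "m*n" and r = k
          and f = "\<lambda>R u. cnj (E (R div n) $$ (u, R mod n))" and g = "\<lambda>u C. E (C div n) $$ (u, C mod n)"]
      by (simp add: mat_rank_def block_mat_gram[OF Ec])
    finally show "haemers n S \<le> k" .
  qed (use nonempty in blast)
qed

lemma root_indep_number_tpow_le_haemers:
  assumes S: "nc_graph n S" and k: "0 < k"
  shows "root k (real (indep_number (n^k) (tpow n S k))) \<le> haemers n S"
proof -
  obtain m F where "haemers_witness n S m F" and "factors_through (haemers n S) (block_mat m n F)"
    using haemers_attained[OF S] by blast
  then obtain m' F' where "haemers_witness (n^k) (tpow n S k) m' F'"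
    and "factors_through (haemers n S ^ k) (block_mat m' (n^k) F')"
    using haemers_witness_tpow by blast
  then have "real (indep_number (n^k) (tpow n S k)) \<le> real (haemers n S) ^ k"
    using indep_number_le_factor_width of_nat_le_iff by fastforce
  then have "root k (real (indep_number (n^k) (tpow n S k))) \<le> root k (real (haemers n S) ^ k)"
    using k by simp
  also have "\<dots> = real (haemers n S)" using real_root_power_cancel[OF k] by simp
  finally show ?thesis .
qed

lemma shannon_capacity_le_haemers:
  "nc_graph n S \<Longrightarrow> shannon_capacity n S \<le> haemers n S"
  unfolding shannon_capacity_def by (rule cSUP_least) (auto simp: root_indep_number_tpow_le_haemers)

lemma indep_number_le_shannon_capacity:
  assumes S: "nc_graph n S"
  shows "indep_number n S \<le> shannon_capacity n S"
proof -
  have sub: "subspace_mat n S" using S unfolding nc_graph_def by blast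
  obtain m F where F: "haemers_witness n S m F"
    and r: "factors_through (haemers n S) (block_mat m n F)"
    using haemers_attained[OF S] by blast
  obtain m' F' where F': "haemers_witness n (tpow n S 1) m' F'"
    and r': "factors_through (haemers n S) (block_mat m' n F')"
    using haemers_witness_tpow[OF F r, of 1] by auto
  have "indep_number n S \<le> indep_number n (tpow n S 1)"
    unfolding indep_number_eq_Sup
    using zero_mem_independent_sizes independent_sizes_bdd_above[OF F' r']
      independent_sizes_antimono[OF tpow_one_subset[OF sub]]
    by (intro cSup_subset_mono) blast+
  then have "real (indep_number n S) \<le> root 1 (real (indep_number (n^1) (tpow n S 1)))" by simp
  also have "\<dots> \<le> shannon_capacity n S"
    unfolding shannon_capacity_def
    using root_indep_number_tpow_le_haemers[OF S] by (intro cSUP_upper bdd_aboveI2[where M = "real (haemers n S)"]) auto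
  finally show ?thesis .
qed

theorem mainTheorem3:
  fixes n :: nat and S :: "complex mat set"
  assumes "nc_graph n S"
  shows "real (indep_number n S) \<le> shannon_capacity n S \<and>
         shannon_capacity n S \<le> real (haemers n S) \<and>
         haemers n S \<le> orth_rank n S"
  using indep_number_le_shannon_capacity[OF assms] shannon_capacity_le_haemers[OF assms]
    haemers_le_orth_rank[OF assms]
  by blast

end
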